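(* Let $F$ be a formal group law over a ring $R$ such that the $n$-series $[n]_F(t)\in R[[t]]$ is not a zero-divisor for any $n>0$. Then the GNS $s(n)=[n]_F(t)$ on $R[[t]]$ is Lucasian: $s(a+b)\equiv s(a)+s(b)\bmod s(a)s(b)$ for all $a,b\in\mathbf N$.
   Context: A generalized $n$-series (GNS) over a ring $D$ is a function $s\colon\mathbf N\to D$ with $s(0)=0$, $s(n)$ a non-zero-divisor for $n>0$, and $s(n-k)\mid s(n)-s(k)$ for all $n>k>0$. A GNS $s$ is Lucasian if $s(a+b)\equiv s(a)+s(b)\bmod s(a)s(b)$ for all $a,b$. Here $[n]_F(t)$ is the $n$-fold formal sum of $t$ with itself. *)

theory Defs
  imports "HOL-Computational_Algebra.Formal_Power_Series"
begin

text \<open>A formal power series F(x,y) in R[[x,y]] is represented by its coefficient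
  array C, i.e. F(x,y) = sum over i j of C i j x^i y^j.
  Power series in three variables x,y,z are represented by coefficient functions
  nat => nat => nat => 'a (coefficient of x^a y^b z^c).\<close>

type_synonym 'a ps3 = "nat \<Rightarrow> nat \<Rightarrow> nat \<Rightarrow> 'a"

definition ps3_mult :: "'a::comm_ring_1 ps3 \<Rightarrow> 'a ps3 \<Rightarrow> 'a ps3" where
  "ps3_mult f g = (\<lambda>a b c. \<Sum>a1\<le>a. \<Sum>b1\<le>b. \<Sum>c1\<le>c.
      f a1 b1 c1 * g (a - a1) (b - b1) (c - c1))"

definition ps3_one :: "'a::comm_ring_1 ps3" where
  "ps3_one = (\<lambda>a b c. if a = 0 \<and> b = 0 \<and> c = 0 then 1 else 0)"

primrec ps3_pow :: "'a::comm_ring_1 ps3 \<Rightarrow> nat \<Rightarrow> 'a ps3" where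
  "ps3_pow f 0 = ps3_one"
| "ps3_pow f (Suc n) = ps3_mult f (ps3_pow f n)"

definition ps3_X :: "'a::comm_ring_1 ps3" where
  "ps3_X = (\<lambda>a b c. if a = 1 \<and> b = 0 \<and> c = 0 then 1 else 0)"
definition ps3_Y :: "'a::comm_ring_1 ps3" where
  "ps3_Y = (\<lambda>a b c. if a = 0 \<and> b = 1 \<and> c = 0 then 1 else 0)"
definition ps3_Z :: "'a::comm_ring_1 ps3" where
  "ps3_Z = (\<lambda>a b c. if a = 0 \<and> b = 0 \<and> c = 1 then 1 else 0)"

text \<open>Substitution F(G,H) of three-variable series G, H without constant term into
  the two-variable series with coefficients C (only monomials of total degree
  at most a+b+c can contribute to the coefficient of x^a y^b z^c).\<close>
definition ps3_subst :: "(nat \<Rightarrow> nat \<Rightarrow> 'a::comm_ring_1) \<Rightarrow> 'a ps3 \<Rightarrow> 'a ps3 \<Rightarrow> 'a ps3" where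
  "ps3_subst C G H = (\<lambda>a b c. \<Sum>i\<le>a+b+c. \<Sum>j\<le>a+b+c.
      C i j * ps3_mult (ps3_pow G i) (ps3_pow H j) a b c)"

definition formal_group_law :: "(nat \<Rightarrow> nat \<Rightarrow> 'a::comm_ring_1) \<Rightarrow> bool" where
  "formal_group_law C \<longleftrightarrow>
     (\<forall>i. C i 0 = (if i = 1 then 1 else 0)) \<and>
     (\<forall>j. C 0 j = (if j = 1 then 1 else 0)) \<and>
     (\<forall>i j. C i j = C j i) \<and>
     ps3_subst C (ps3_subst C ps3_X ps3_Y) ps3_Z = ps3_subst C ps3_X (ps3_subst C ps3_Y ps3_Z)"

text \<open>F(f,g) for f, g in R[[t]] with zero constant term.\<close>
definition fgl_apply :: "(nat \<Rightarrow> nat \<Rightarrow> 'a::comm_ring_1) \<Rightarrow> 'a fps \<Rightarrow> 'a fps \<Rightarrow> 'a fps" where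
  "fgl_apply C f g = Abs_fps (\<lambda>k. \<Sum>i\<le>k. \<Sum>j\<le>k. C i j * fps_nth (f ^ i * g ^ j) k)"

primrec fgl_nseries :: "(nat \<Rightarrow> nat \<Rightarrow> 'a::comm_ring_1) \<Rightarrow> nat \<Rightarrow> 'a fps" where
  "fgl_nseries C 0 = 0"
| "fgl_nseries C (Suc n) = fgl_apply C (fgl_nseries C n) fps_X"

definition zero_divisor_free_elem :: "'a::comm_ring_1 \<Rightarrow> bool" where
  "zero_divisor_free_elem x \<longleftrightarrow> (\<forall>y. x * y = 0 \<longrightarrow> y = 0)"

definition gns :: "(nat \<Rightarrow> 'a::comm_ring_1) \<Rightarrow> bool" where
  "gns s \<longleftrightarrow> s 0 = 0 \<and> (\<forall>n>0. zero_divisor_free_elem (s n)) \<and>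
     (\<forall>n k. 0 < k \<and> k < n \<longrightarrow> s (n - k) dvd s n - s k)"

definition lucasian :: "(nat \<Rightarrow> 'a::comm_ring_1) \<Rightarrow> bool" where
  "lucasian s \<longleftrightarrow> gns s \<and> (\<forall>a b. s a * s b dvd s (a + b) - (s a + s b))"

end

(* Since F(x,0) = x and F(0,y) = y, every monomial of F(x,y) - x - y is divisible by x y,
   so F(x,y) = x + y + x y D(x,y).  Associativity of F gives [a+b]_F(t) = F([a]_F(t), [b]_F(t)),
   hence [a+b]_F - [a]_F - [b]_F = [a]_F [b]_F D([a]_F, [b]_F): this is the Lucas congruence, and
   for a = n - k, b = k it also shows [n-k]_F | [n]_F - [k]_F.
   The formal content is that substituting series without constant term into F is compatible
   with the ring operations.  A series in x, y, z is viewed as a series in x over R[[z]][[y]], and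
   evaluation at (f, g, h) is the composite of three one-variable substitutions, each of which
   is a ring homomorphism; truncation shows that it commutes with substitution into F. *)
theory Submission
  imports Defs
begin

unbundle fps_syntax

locale comm_ring_hom =
  fixes hom :: "'a::comm_ring_1 \<Rightarrow> 'b::comm_ring_1"
  assumes hom_add: "hom (x + y) = hom x + hom y"
    and hom_mult: "hom (x * y) = hom x * hom y"
    and hom_one: "hom 1 = 1"
begin

lemma hom_zero: "hom 0 = 0"
  using hom_add [of 0 0] by simp

lemma hom_sum: "hom (sum f A) = (\<Sum>x\<in>A. hom (f x))"
  by (induction A rule: infinite_finite_induct) (simp_all add: hom_zero hom_add)

lemma hom_power: "hom (x ^ n) = hom x ^ n"
  by (induction n) (simp_all add: hom_one hom_mult)

end

lemma comm_ring_hom_comp: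
  "comm_ring_hom \<phi> \<Longrightarrow> comm_ring_hom \<psi> \<Longrightarrow> comm_ring_hom (\<phi> \<circ> \<psi>)"
  by (simp add: comm_ring_hom_def)

lemma comm_ring_hom_fps_const: "comm_ring_hom fps_const"
  by (simp add: comm_ring_hom_def)

definition fps_map :: "('a \<Rightarrow> 'b) \<Rightarrow> 'a fps \<Rightarrow> 'b fps" where
  "fps_map \<phi> f = Abs_fps (\<lambda>n. \<phi> (f $ n))"

lemma fps_map_nth [simp]: "fps_map \<phi> f $ n = \<phi> (f $ n)"
  by (simp add: fps_map_def)

lemma comm_ring_hom_fps_map:
  assumes "comm_ring_hom \<phi>"
  shows "comm_ring_hom (fps_map \<phi>)"
proof
  interpret comm_ring_hom \<phi> by fact
  fix f g :: "'a fps"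
  show "fps_map \<phi> (f + g) = fps_map \<phi> f + fps_map \<phi> g"
    by (rule fps_ext) (simp add: hom_add)
  show "fps_map \<phi> (f * g) = fps_map \<phi> f * fps_map \<phi> g"
    by (rule fps_ext) (simp add: fps_mult_nth hom_sum hom_mult)
  show "fps_map \<phi> 1 = 1"
    by (rule fps_ext) (simp add: fps_one_nth hom_one hom_zero)
qed

lemma fps_map_X: "comm_ring_hom \<phi> \<Longrightarrow> fps_map \<phi> fps_X = fps_X"
  by (rule fps_ext) (simp add: fps_X_def comm_ring_hom.hom_one comm_ring_hom.hom_zero)

lemma fps_map_zero [simp]: "\<phi> 0 = 0 \<Longrightarrow> fps_map \<phi> 0 = 0"
  by (rule fps_ext) simp

lemma fps_map_const: "\<phi> 0 = 0 \<Longrightarrow> fps_map \<phi> (fps_const c) = fps_const (\<phi> c)"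
  by (rule fps_ext) simp

subsection \<open>Substitution into one variable\<close>

lemma fps_mult_power_nth_eq_0:
  fixes g :: "'a::comm_ring_1 fps"
  assumes "g $ 0 = 0" "k < n"
  shows "(f * g ^ n) $ k = 0"
  unfolding fps_mult_nth
  by (intro sum.neutral ballI) (use assms startsby_zero_power_prefix[OF assms(1)] in auto)

text \<open>The sum for the coefficient of
  \<open>t\<^sup>k\<close> is cut off at \<open>b = k\<close>, which is harmless only when \<open>g $ 0 = 0\<close>.\<close>

definition fps_eval :: "'a::comm_ring_1 fps \<Rightarrow> 'a fps fps \<Rightarrow> 'a fps" where
  "fps_eval g Q = Abs_fps (\<lambda>k. \<Sum>b\<le>k. (Q $ b * g ^ b) $ k)"

lemma fps_eval_nth: "fps_eval g Q $ k = (\<Sum>b\<le>k. (Q $ b * g ^ b) $ k)"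
  by (simp add: fps_eval_def)

lemma fps_eval_zero [simp]: "fps_eval g 0 = 0"
  by (rule fps_ext) (simp add: fps_eval_nth)

lemma fps_eval_nth_truncate:
  assumes "g $ 0 = 0" "k \<le> N"
  shows "fps_eval g Q $ k = (\<Sum>b\<le>N. Q $ b * g ^ b) $ k"
  unfolding fps_eval_nth fps_sum_nth
  by (rule sum.mono_neutral_left) (use assms in \<open>auto intro!: fps_mult_power_nth_eq_0\<close>)

lemma fps_eval_nth_cong:
  assumes "\<And>b m. b \<le> k \<Longrightarrow> m \<le> k \<Longrightarrow> Q $ b $ m = Q' $ b $ m"
  shows "fps_eval g Q $ k = fps_eval g Q' $ k"
  unfolding fps_eval_nth fps_mult_nth using assms
  by (intro sum.cong refl) auto

lemma fps_eval_mult: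
  fixes g :: "'a::comm_ring_1 fps"
  assumes g0: "g $ 0 = 0"
  shows "fps_eval g (Q * R) = fps_eval g Q * fps_eval g R"
proof (rule fps_ext)
  fix k
  define t where "t = (\<lambda>i j. Q $ i * R $ j * g ^ (i + j))"
  have "(fps_eval g Q * fps_eval g R) $ k
      = ((\<Sum>b\<le>k. Q $ b * g ^ b) * (\<Sum>b\<le>k. R $ b * g ^ b)) $ k"
    unfolding fps_mult_nth
    by (intro sum.cong refl) (simp add: fps_eval_nth_truncate[OF g0, where N=k])
  also have "(\<Sum>b\<le>k. Q $ b * g ^ b) * (\<Sum>b\<le>k. R $ b * g ^ b)
      = (\<Sum>(i, j)\<in>{..k} \<times> {..k}. t i j)"
    unfolding sum_product t_def
    by (simp add: power_add algebra_simps sum.cartesian_product)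
  also have "\<dots> $ k = (\<Sum>(i, j)\<in>{(i, j). i + j \<le> k}. t i j) $ k"
    unfolding fps_sum_nth
    by (rule sum.mono_neutral_right)
      (auto simp: t_def, metis not_le fps_mult_power_nth_eq_0[OF g0])
  also have "(\<Sum>(i, j)\<in>{(i, j). i + j \<le> k}. t i j) = (\<Sum>n\<le>k. \<Sum>i\<le>n. t i (n - i))"
    by (rule sum.triangle_reindex_eq)
  also have "\<dots> = (\<Sum>n\<le>k. (Q * R) $ n * g ^ n)"
    by (intro sum.cong refl) (simp add: t_def fps_mult_nth atMost_atLeast0 sum_distrib_right)
  also have "\<dots> $ k = fps_eval g (Q * R) $ k"
    by (rule fps_eval_nth_truncate[OF g0, symmetric]) simp
  finally show "fps_eval g (Q * R) $ k = (fps_eval g Q * fps_eval g R) $ k" ..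
qed

lemma comm_ring_hom_fps_eval:
  assumes g0: "g $ 0 = 0"
  shows "comm_ring_hom (fps_eval g)"
proof
  fix Q R
  show "fps_eval g (Q + R) = fps_eval g Q + fps_eval g R"
    by (rule fps_ext) (simp add: fps_eval_nth distrib_right sum.distrib)
  show "fps_eval g (Q * R) = fps_eval g Q * fps_eval g R"
    by (rule fps_eval_mult[OF g0])
  show "fps_eval g 1 = 1"
    by (rule fps_ext)
      (simp add: fps_eval_nth fps_one_nth if_distrib[of "\<lambda>x. (x * y) $ n" for y n] cong: if_cong)
qed

lemma fps_eval_X: "g $ 0 = 0 \<Longrightarrow> fps_eval g fps_X = g"
  by (rule fps_ext)
    (auto simp: fps_eval_nth fps_X_def Suc_le_eq if_distrib[of "\<lambda>x. (x * y) $ n" for y n] cong: if_cong)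

lemma fps_eval_const: "fps_eval g (fps_const c) = c"
  by (rule fps_ext)
    (simp add: fps_eval_nth if_distrib[of "\<lambda>x. (x * y) $ n" for y n] cong: if_cong)

subsection \<open>Series in three variables\<close>

definition fps3_of :: "'a::comm_ring_1 ps3 \<Rightarrow> 'a fps fps fps" where
  "fps3_of P = Abs_fps (\<lambda>a. Abs_fps (\<lambda>b. Abs_fps (\<lambda>c. P a b c)))"

lemma fps3_of_nth [simp]: "fps3_of P $ a $ b $ c = P a b c"
  by (simp add: fps3_of_def)

lemma fps3_eqI:
  fixes T T' :: "'a fps fps fps"
  assumes "\<And>a b c. T $ a $ b $ c = T' $ a $ b $ c"
  shows "T = T'"
  using assms by (intro fps_ext) auto

lemma fps3_of_mult: "fps3_of (ps3_mult P Q) = fps3_of P * fps3_of Q"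
  by (rule fps3_eqI) (simp add: fps_mult_nth fps_sum_nth atLeast0AtMost ps3_mult_def)

lemma fps3_of_one: "fps3_of ps3_one = 1"
  by (rule fps3_eqI) (simp add: fps_one_nth ps3_one_def)

lemma fps3_of_pow: "fps3_of (ps3_pow P n) = fps3_of P ^ n"
  by (induction n) (simp_all add: fps3_of_one fps3_of_mult)

lemma fps3_of_X: "fps3_of ps3_X = fps_X"
  by (rule fps3_eqI) (simp add: fps_X_def fps_one_nth ps3_X_def)

lemma fps3_of_Y: "fps3_of ps3_Y = fps_const fps_X"
  by (rule fps3_eqI) (simp add: fps_X_def ps3_Y_def)

lemma fps3_of_Z: "fps3_of ps3_Z = fps_const (fps_const fps_X)"
  by (rule fps3_eqI) (simp add: fps_X_def ps3_Z_def)

definition fps3_eval ::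
    "'a::comm_ring_1 fps \<Rightarrow> 'a fps \<Rightarrow> 'a fps \<Rightarrow> 'a fps fps fps \<Rightarrow> 'a fps" where
  "fps3_eval f g h =
     fps_eval f \<circ> fps_map (fps_eval g \<circ> fps_map (fps_eval h \<circ> fps_map fps_const))"

lemma comm_ring_hom_fps3_eval:
  "f $ 0 = 0 \<Longrightarrow> g $ 0 = 0 \<Longrightarrow> h $ 0 = 0 \<Longrightarrow> comm_ring_hom (fps3_eval f g h)"
  unfolding fps3_eval_def
  by (intro comm_ring_hom_comp comm_ring_hom_fps_eval comm_ring_hom_fps_map comm_ring_hom_fps_const)

lemma fps3_eval_X: "f $ 0 = 0 \<Longrightarrow> g $ 0 = 0 \<Longrightarrow> h $ 0 = 0 \<Longrightarrow> fps3_eval f g h fps_X = f"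
  unfolding fps3_eval_def
  by (simp add: fps_map_X fps_eval_X comm_ring_hom_comp comm_ring_hom_fps_eval
      comm_ring_hom_fps_map comm_ring_hom_fps_const)

lemma fps3_eval_Y:
  "f $ 0 = 0 \<Longrightarrow> g $ 0 = 0 \<Longrightarrow> h $ 0 = 0 \<Longrightarrow> fps3_eval f g h (fps_const fps_X) = g"
  unfolding fps3_eval_def
  by (simp add: fps_map_const fps_eval_const fps_map_X fps_eval_X comm_ring_hom_comp
      comm_ring_hom_fps_eval comm_ring_hom_fps_map comm_ring_hom_fps_const)

lemma fps3_eval_Z:
  "h $ 0 = 0 \<Longrightarrow> fps3_eval f g h (fps_const (fps_const fps_X)) = h"
  unfolding fps3_eval_def
  by (simp add: fps_map_const fps_eval_const fps_map_X fps_eval_X comm_ring_hom_fps_const)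

lemma fps3_eval_const: "fps3_eval f g h (fps_const (fps_const (fps_const c))) = fps_const c"
  by (simp add: fps3_eval_def fps_map_const fps_eval_const)

lemma fps3_eval_nth_cong:
  assumes "\<And>a b c. a \<le> k \<Longrightarrow> b \<le> k \<Longrightarrow> c \<le> k \<Longrightarrow> T $ a $ b $ c = T' $ a $ b $ c"
  shows "fps3_eval f g h T $ k = fps3_eval f g h T' $ k"
  unfolding fps3_eval_def o_def
  by (rule fps_eval_nth_cong, unfold fps_map_nth)+ (use assms in auto)

definition ps3_vanishes_below :: "nat \<Rightarrow> 'a::comm_ring_1 ps3 \<Rightarrow> bool" where
  "ps3_vanishes_below n P \<longleftrightarrow> (\<forall>a b c. a + b + c < n \<longrightarrow> P a b c = 0)"

lemma ps3_vanishes_below_mult_left: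
  "ps3_vanishes_below n P \<Longrightarrow> ps3_vanishes_below n (ps3_mult P Q)"
  unfolding ps3_vanishes_below_def ps3_mult_def by (auto intro!: sum.neutral)

lemma ps3_vanishes_below_mult_right:
  "ps3_vanishes_below n Q \<Longrightarrow> ps3_vanishes_below n (ps3_mult P Q)"
  unfolding ps3_vanishes_below_def ps3_mult_def by (auto intro!: sum.neutral)

lemma ps3_vanishes_below_mult_Suc:
  assumes P: "ps3_vanishes_below 1 P" and Q: "ps3_vanishes_below m Q"
  shows "ps3_vanishes_below (Suc m) (ps3_mult P Q)"
  unfolding ps3_vanishes_below_def ps3_mult_def
proof (intro allI impI sum.neutral ballI)
  fix a b c a1 b1 c1
  assume deg: "a + b + c < Suc m" and "a1 \<in> {..a}" "b1 \<in> {..b}" "c1 \<in> {..c}"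
  show "P a1 b1 c1 * Q (a - a1) (b - b1) (c - c1) = 0"
  proof (cases "a1 + b1 + c1 = 0")
    case True
    then show ?thesis using P by (simp add: ps3_vanishes_below_def)
  next
    case False
    with deg \<open>a1 \<in> {..a}\<close> \<open>b1 \<in> {..b}\<close> \<open>c1 \<in> {..c}\<close>
    have "(a - a1) + (b - b1) + (c - c1) < m" by auto
    then show ?thesis using Q by (simp add: ps3_vanishes_below_def)
  qed
qed

lemma ps3_vanishes_below_pow: "G 0 0 0 = 0 \<Longrightarrow> ps3_vanishes_below n (ps3_pow G n)"
proof (induction n)
  case 0
  then show ?case by (simp add: ps3_vanishes_below_def)
next
  case (Suc n)
  then have "ps3_vanishes_below 1 G" by (simp add: ps3_vanishes_below_def)
  with Suc show ?case by (simp add: ps3_vanishes_below_mult_Suc)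
qed

lemma sum_atMost_square_shrink:
  fixes F :: "nat \<Rightarrow> nat \<Rightarrow> 'b::comm_monoid_add"
  assumes "M \<le> N" and "\<And>i j. i \<le> N \<Longrightarrow> j \<le> N \<Longrightarrow> M < i \<or> M < j \<Longrightarrow> F i j = 0"
  shows "(\<Sum>i\<le>N. \<Sum>j\<le>N. F i j) = (\<Sum>i\<le>M. \<Sum>j\<le>M. F i j)"
proof -
  have "(\<Sum>i\<le>N. \<Sum>j\<le>N. F i j) = (\<Sum>i\<le>N. \<Sum>j\<le>M. F i j)"
    by (intro sum.cong refl sum.mono_neutral_right) (use assms in auto)
  also have "\<dots> = (\<Sum>i\<le>M. \<Sum>j\<le>M. F i j)"
    by (intro sum.mono_neutral_right) (use assms in \<open>auto intro!: sum.neutral\<close>)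
  finally show ?thesis .
qed

lemma ps3_subst_eq_truncated_sum:
  assumes G0: "G 0 0 0 = 0" and H0: "H 0 0 0 = 0" and N: "a + b + c \<le> N"
  shows "ps3_subst C G H a b c =
    (\<Sum>i\<le>N. \<Sum>j\<le>N. C i j * ps3_mult (ps3_pow G i) (ps3_pow H j) a b c)"
  unfolding ps3_subst_def
proof (rule sum_atMost_square_shrink[symmetric, OF N])
  fix i j
  assume "a + b + c < i \<or> a + b + c < j"
  then show "C i j * ps3_mult (ps3_pow G i) (ps3_pow H j) a b c = 0"
    using ps3_vanishes_below_mult_left[OF ps3_vanishes_below_pow[of G i, OF G0]]
      ps3_vanishes_below_mult_right[OF ps3_vanishes_below_pow[of H j, OF H0]]
    by (auto simp: ps3_vanishes_below_def)
qed

lemma fps3_eval_nth_0: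
  assumes "f $ 0 = 0" "g $ 0 = 0" "h $ 0 = 0" "G 0 0 0 = 0"
  shows "fps3_eval f g h (fps3_of G) $ 0 = 0"
proof -
  have "fps3_eval f g h (fps3_of G) $ 0 = fps3_eval f g h 0 $ 0"
    by (rule fps3_eval_nth_cong) (use assms in auto)
  then show ?thesis
    using comm_ring_hom.hom_zero[OF comm_ring_hom_fps3_eval[OF assms(1-3)]] by simp
qed

lemma fps3_eval_ps3_subst:
  assumes f0: "f $ 0 = 0" and g0: "g $ 0 = 0" and h0: "h $ 0 = 0"
    and G0: "G 0 0 0 = 0" and H0: "H 0 0 0 = 0"
  shows "fps3_eval f g h (fps3_of (ps3_subst C G H)) =
    fgl_apply C (fps3_eval f g h (fps3_of G)) (fps3_eval f g h (fps3_of H))"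
proof (rule fps_ext)
  fix k
  define EG where "EG = fps3_eval f g h (fps3_of G)"
  define EH where "EH = fps3_eval f g h (fps3_of H)"
  have EG0: "EG $ 0 = 0" unfolding EG_def using f0 g0 h0 G0 by (rule fps3_eval_nth_0)
  have EH0: "EH $ 0 = 0" unfolding EH_def using f0 g0 h0 H0 by (rule fps3_eval_nth_0)
  interpret comm_ring_hom "fps3_eval f g h" by (rule comm_ring_hom_fps3_eval[OF f0 g0 h0])
  let ?c = "\<lambda>x. fps_const (fps_const (fps_const x))"
  \<comment> \<open>\<open>fps3_eval_nth_cong\<close> only looks at monomials of total degree at most \<open>3 k\<close>\<close>
  have "fps3_eval f g h (fps3_of (ps3_subst C G H)) $ k =
        fps3_eval f g h (\<Sum>i\<le>3*k. \<Sum>j\<le>3*k. ?c (C i j) * fps3_of G ^ i * fps3_of H ^ j) $ k"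
    by (rule fps3_eval_nth_cong)
      (simp add: fps_sum_nth mult.assoc ps3_subst_eq_truncated_sum[where G=G and H=H, OF G0 H0]
        flip: fps3_of_pow fps3_of_mult)
  also have "\<dots> = (\<Sum>i\<le>3*k. \<Sum>j\<le>3*k. fps_const (C i j) * EG ^ i * EH ^ j) $ k"
    by (simp add: hom_sum hom_mult hom_power fps3_eval_const EG_def EH_def)
  also have "\<dots> = (\<Sum>i\<le>3*k. \<Sum>j\<le>3*k. C i j * (EG ^ i * EH ^ j) $ k)"
    by (simp add: fps_sum_nth mult.assoc)
  also have "\<dots> = (\<Sum>i\<le>k. \<Sum>j\<le>k. C i j * (EG ^ i * EH ^ j) $ k)"
    by (rule sum_atMost_square_shrink)
      (auto simp: fps_mult_power_nth_eq_0[OF EH0]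
        fps_mult_power_nth_eq_0[OF EG0, of k _ "EH ^ _", unfolded mult.commute[of "EH ^ _"]])
  also have "\<dots> = fgl_apply C EG EH $ k"
    by (simp add: fgl_apply_def)
  finally show "fps3_eval f g h (fps3_of (ps3_subst C G H)) $ k = fgl_apply C EG EH $ k" .
qed

subsection \<open>Formal group laws\<close>

lemma formal_group_lawD:
  assumes "formal_group_law C"
  shows "C i 0 = (if i = 1 then 1 else 0)" "C 0 j = (if j = 1 then 1 else 0)"
    and "ps3_subst C (ps3_subst C ps3_X ps3_Y) ps3_Z = ps3_subst C ps3_X (ps3_subst C ps3_Y ps3_Z)"
  using assms by (auto simp: formal_group_law_def)

lemma ps3_subst_X_Y: "ps3_subst C ps3_X ps3_Y a b c = (if c = 0 then C a b else 0)"
proof -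
  have monomial: "ps3_mult (ps3_pow ps3_X i) (ps3_pow ps3_Y j) a b c =
      (if j = b then if i = a then if c = 0 then 1 else 0 else 0 else 0)" for i j
  proof -
    have "ps3_mult (ps3_pow ps3_X i) (ps3_pow ps3_Y j) a b c =
        (fps_X ^ i * fps_const (fps_X ^ j)) $ a $ b $ c"
      by (metis fps3_of_mult fps3_of_nth fps3_of_pow fps3_of_X fps3_of_Y fps_const_power)
    then show ?thesis
      by (auto simp: fps_X_power_mult_nth fps_one_nth)
  qed
  show ?thesis
    unfolding ps3_subst_def monomial
    by (simp add: if_distrib[of "\<lambda>x. C i j * x" for i j] cong: if_cong)
qed

definition fgl_cofactor :: "(nat \<Rightarrow> nat \<Rightarrow> 'a::comm_ring_1) \<Rightarrow> 'a fps \<Rightarrow> 'a fps \<Rightarrow> 'a fps" where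
  "fgl_cofactor C f g =
     fps3_eval f g 0 (fps3_of (\<lambda>a b c. if c = 0 then C (Suc a) (Suc b) else 0))"

lemma fps3_of_ps3_subst_X_Y:
  assumes "formal_group_law C"
  shows "fps3_of (ps3_subst C ps3_X ps3_Y) = fps_X + fps_const fps_X +
    fps_X * (fps_const fps_X * fps3_of (\<lambda>a b c. if c = 0 then C (Suc a) (Suc b) else 0))"
proof (rule fps3_eqI)
  fix a b c
  show "fps3_of (ps3_subst C ps3_X ps3_Y) $ a $ b $ c = (fps_X + fps_const fps_X +
      fps_X * (fps_const fps_X * fps3_of (\<lambda>a b c. if c = 0 then C (Suc a) (Suc b) else 0))) $ a $ b $ c"
    unfolding fps3_of_nth ps3_subst_X_Y
    by (cases a; cases b) (auto simp: fps_one_nth formal_group_lawD[OF assms])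
qed

lemma fgl_apply_eq_cofactor:
  assumes C: "formal_group_law C" and f0: "f $ 0 = 0" and g0: "g $ 0 = 0"
  shows "fgl_apply C f g = f + g + f * g * fgl_cofactor C f g"
proof -
  have z0: "(0::'a fps) $ 0 = 0" by simp
  interpret comm_ring_hom "fps3_eval f g 0" by (rule comm_ring_hom_fps3_eval[OF f0 g0 z0])
  have "fgl_apply C f g =
      fgl_apply C (fps3_eval f g 0 (fps3_of ps3_X)) (fps3_eval f g 0 (fps3_of ps3_Y))"
    by (simp add: fps3_of_X fps3_of_Y fps3_eval_X[OF f0 g0 z0] fps3_eval_Y[OF f0 g0 z0])
  also have "\<dots> = fps3_eval f g 0 (fps3_of (ps3_subst C ps3_X ps3_Y))"
    by (rule fps3_eval_ps3_subst[symmetric, OF f0 g0 z0]) (simp_all add: ps3_X_def ps3_Y_def)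
  also have "\<dots> = f + g + f * g * fgl_cofactor C f g"
    by (simp add: fps3_of_ps3_subst_X_Y[OF C] hom_add hom_mult fgl_cofactor_def mult.assoc
        fps3_eval_X[OF f0 g0 z0] fps3_eval_Y[OF f0 g0 z0])
  finally show ?thesis .
qed

lemma fgl_apply_nth_0: "formal_group_law C \<Longrightarrow> fgl_apply C f g $ 0 = 0"
  by (simp add: fgl_apply_def formal_group_lawD)

lemma fgl_apply_assoc:
  assumes C: "formal_group_law C" and f0: "f $ 0 = 0" and g0: "g $ 0 = 0" and h0: "h $ 0 = 0"
  shows "fgl_apply C (fgl_apply C f g) h = fgl_apply C f (fgl_apply C g h)"
proof -
  have subst0: "ps3_subst C ps3_X ps3_Y 0 0 0 = 0" "ps3_subst C ps3_Y ps3_Z 0 0 0 = 0"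
    by (simp_all add: ps3_subst_def formal_group_lawD[OF C])
  have var0: "ps3_X 0 0 0 = (0::'a)" "ps3_Y 0 0 0 = (0::'a)" "ps3_Z 0 0 0 = (0::'a)"
    by (simp_all add: ps3_X_def ps3_Y_def ps3_Z_def)
  note eval = fps3_eval_ps3_subst[OF f0 g0 h0] subst0 var0 fps3_of_X fps3_of_Y fps3_of_Z
    fps3_eval_X[OF f0 g0 h0] fps3_eval_Y[OF f0 g0 h0] fps3_eval_Z[OF h0]
  have "fgl_apply C (fgl_apply C f g) h =
      fps3_eval f g h (fps3_of (ps3_subst C (ps3_subst C ps3_X ps3_Y) ps3_Z))"
    by (simp add: eval)
  also have "\<dots> = fps3_eval f g h (fps3_of (ps3_subst C ps3_X (ps3_subst C ps3_Y ps3_Z)))"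
    by (simp add: formal_group_lawD(3)[OF C])
  also have "\<dots> = fgl_apply C f (fgl_apply C g h)"
    by (simp add: eval)
  finally show ?thesis .
qed

lemma fgl_nseries_nth_0: "formal_group_law C \<Longrightarrow> fgl_nseries C n $ 0 = 0"
  by (cases n) (simp_all add: fgl_apply_nth_0)

lemma fgl_nseries_add:
  assumes C: "formal_group_law C"
  shows "fgl_nseries C (a + b) = fgl_apply C (fgl_nseries C a) (fgl_nseries C b)"
proof (induction b)
  case 0
  show ?case
    using fgl_apply_eq_cofactor[OF C fgl_nseries_nth_0[OF C, of a], of 0] by simp
next
  case (Suc b)
  have "fgl_nseries C (a + Suc b) =
      fgl_apply C (fgl_apply C (fgl_nseries C a) (fgl_nseries C b)) fps_X"
    by (simp add: Suc.IH)
  also have "\<dots> = fgl_apply C (fgl_nseries C a) (fgl_apply C (fgl_nseries C b) fps_X)"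
    by (rule fgl_apply_assoc[OF C fgl_nseries_nth_0[OF C] fgl_nseries_nth_0[OF C]]) simp
  finally show ?case by simp
qed

theorem lemma5p10:
  fixes C :: "nat \<Rightarrow> nat \<Rightarrow> 'a::comm_ring_1"
  assumes "formal_group_law C"
    and "\<And>n. n > 0 \<Longrightarrow> zero_divisor_free_elem (fgl_nseries C n)"
  shows "lucasian (fgl_nseries C)"
proof -
  let ?s = "fgl_nseries C" and ?D = "\<lambda>a b. fgl_cofactor C (fgl_nseries C a) (fgl_nseries C b)"
  have add: "?s (a + b) = ?s a + ?s b + ?s a * ?s b * ?D a b" for a b
    using fgl_nseries_add fgl_apply_eq_cofactor fgl_nseries_nth_0 assms(1) by metis
  have lucas: "?s a * ?s b dvd ?s (a + b) - (?s a + ?s b)" for a b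
    by (simp add: add)
  have "?s (n - k) dvd ?s n - ?s k" if "k < n" for n k
  proof
    show "?s n - ?s k = ?s (n - k) * (1 + ?s k * ?D (n - k) k)"
      using add[of "n - k" k] that by (simp add: algebra_simps)
  qed
  with assms(2) lucas show ?thesis
    by (simp add: lucasian_def gns_def)
qed

end
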